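(* Let $(\Omega,\mathcal F)$ be a measurable space, $\mathcal X$ the set of bounded measurable functions on it, $W$ a nonempty set of capacities, $V$ a nonempty set of binary capacities, and $\alpha\in(0,1)$. Define pointwise on $\mathcal F$: $\overline w=\sup_{w\in W}w$, $\underline w=\inf_{w\in W}w$, $\overline v=\sup_{v\in V}v$, $\underline v=\inf_{v\in V}v$. Then, as functions on $\mathcal X$, $$\sup_{w\in W}Q^w_\alpha=Q^{\overline w}_\alpha,\qquad \sup_{v\in V}I_v=I_{\overline v},\qquad \inf_{w\in W}\overline Q^w_\alpha=\overline Q^{\underline w}_\alpha,\qquad \inf_{v\in V}I_v=I_{\underline v}.$$
   Context: A capacity is an increasing function $w:\mathcal F\to\mathbb R$ (i.e. $w(A)\le w(B)$ for $A\subseteq B$) with $w(\varnothing)=0$, $w(\Omega)=1$; it is binary if it takes values in $\{0,1\}$. For a capacity $w$, $I_w(X)=\int X\,\mathrm dw=\int_{-\infty}^0(w(X\ge x)-1)\,\mathrm dx+\int_0^\infty w(X\ge x)\,\mathrm dx$ for $X\in\mathcal X$. For a capacity $w$: $Q^w_\alpha(X)=\inf\{x\in\mathbb R: w(X\ge x)\le 1-\alpha\}$ and $\overline Q^w_\alpha(X)=\inf\{x\in\mathbb R: w(X\ge x)<1-\alpha\}$. *)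

theory Defs
  imports "HOL-Analysis.Analysis"
begin

definition bmfun :: "'a measure \<Rightarrow> ('a \<Rightarrow> real) set" where
  "bmfun M = {X. X \<in> borel_measurable M \<and> bounded (X ` space M)}"

text \<open>Capacities on the sigma-algebra sets M (only values on sets M matter).\<close>
definition capacity :: "'a measure \<Rightarrow> ('a set \<Rightarrow> real) \<Rightarrow> bool" where
  "capacity M w \<longleftrightarrow>
     (\<forall>A\<in>sets M. \<forall>B\<in>sets M. A \<subseteq> B \<longrightarrow> w A \<le> w B) \<and>
     w {} = 0 \<and> w (space M) = 1"

definition binary_capacity :: "'a measure \<Rightarrow> ('a set \<Rightarrow> real) \<Rightarrow> bool" where
  "binary_capacity M w \<longleftrightarrow> capacity M w \<and> (\<forall>A\<in>sets M. w A \<in> {0, 1})"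

definition ge_set :: "'a measure \<Rightarrow> ('a \<Rightarrow> real) \<Rightarrow> real \<Rightarrow> 'a set" where
  "ge_set M X x = {\<omega> \<in> space M. x \<le> X \<omega>}"

definition choquet :: "'a measure \<Rightarrow> ('a set \<Rightarrow> real) \<Rightarrow> ('a \<Rightarrow> real) \<Rightarrow> real" where
  "choquet M w X =
     integral {..0} (\<lambda>x. w (ge_set M X x) - 1) + integral {0..} (\<lambda>x. w (ge_set M X x))"

definition quantile :: "'a measure \<Rightarrow> ('a set \<Rightarrow> real) \<Rightarrow> real \<Rightarrow> ('a \<Rightarrow> real) \<Rightarrow> real" where
  "quantile M w \<alpha> X = Inf {x. w (ge_set M X x) \<le> 1 - \<alpha>}"

definition upper_quantile :: "'a measure \<Rightarrow> ('a set \<Rightarrow> real) \<Rightarrow> real \<Rightarrow> ('a \<Rightarrow> real) \<Rightarrow> real" where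
  "upper_quantile M w \<alpha> X = Inf {x. w (ge_set M X x) < 1 - \<alpha>}"

end

theory Submission
  imports Defs
begin

text \<open>Everything is read off the decreasing level function \<open>x \<mapsto> w {X \<ge> x}\<close>,
  which is 1 far to the left and 0 far to the right since X is bounded. Raising w to
  \<open>SUP w\<in>W. w\<close> intersects the sublevel sets \<open>{x. w {X \<ge> x} \<le> 1 - \<alpha>}\<close>; these are upward rays,
  so the infimum of the intersection is the supremum of the infima. Lowering w to
  \<open>INF w\<in>W. w\<close> takes the union of the strict sublevel sets, whose infimum is the infimum
  of the infima. For a binary capacity the level function is a step from 1 to 0 at some
  point c, and the Choquet integral and both quantiles all equal c; since suprema and
  infima of binary capacities are again binary, the Choquet statements reduce to the
  quantile statements.\<close>

lemma SUP_Inf_sublevel_antimono: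
  fixes f :: "'i \<Rightarrow> real \<Rightarrow> real"
  assumes "I \<noteq> {}" and bdd: "\<And>x. bdd_above ((\<lambda>i. f i x) ` I)"
    and anti: "\<And>i. i \<in> I \<Longrightarrow> antimono (f i)"
    and above: "\<And>i. i \<in> I \<Longrightarrow> c < f i a" and below: "\<And>i. i \<in> I \<Longrightarrow> f i b \<le> c"
  shows "(SUP i\<in>I. Inf {x. f i x \<le> c}) = Inf {x. (SUP i\<in>I. f i x) \<le> c}"
proof -
  define S where "S i = {x. f i x \<le> c}" for i
  define T where "T = (\<Inter>i\<in>I. S i)"
  have T_eq: "{x. (SUP i\<in>I. f i x) \<le> c} = T"
    unfolding T_def S_def using cSUP_le_iff[OF \<open>I \<noteq> {}\<close> bdd] by auto
  have b_in: "b \<in> S i" if "i \<in> I" for i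
    using below that unfolding S_def by simp
  have a_less: "a < x" if "i \<in> I" "x \<in> S i" for i x
  proof (rule ccontr)
    assume "\<not> a < x"
    then have "f i a \<le> f i x" using anti[OF that(1)] by (simp add: antimono_def)
    then show False using above[OF that(1)] that(2) by (simp add: S_def)
  qed
  have bdd_S: "bdd_below (S i)" if "i \<in> I" for i
    using a_less[OF that] by (meson bdd_belowI less_imp_le)
  obtain i0 where "i0 \<in> I"
    using \<open>I \<noteq> {}\<close> by blast
  have "b \<in> T"
    using b_in unfolding T_def by blast
  have "bdd_below T"
    using bdd_S[OF \<open>i0 \<in> I\<close>] \<open>i0 \<in> I\<close> unfolding T_def by (meson INT_lower bdd_below_mono)
  have "Inf (S i) \<le> Inf T" if "i \<in> I" for i
    using \<open>b \<in> T\<close> bdd_S[OF that] that unfolding T_def by (intro cInf_superset_mono) auto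
  then have SUP_le: "(SUP i\<in>I. Inf (S i)) \<le> Inf T"
    using \<open>I \<noteq> {}\<close> by (intro cSUP_least)
  have bdd_Inf: "bdd_above ((\<lambda>i. Inf (S i)) ` I)"
    using b_in bdd_S by (auto intro!: bdd_aboveI[of _ b] cInf_lower)
  have "y \<in> T" if y: "(SUP i\<in>I. Inf (S i)) < y" for y
    unfolding T_def
  proof
    fix i assume "i \<in> I"
    have "Inf (S i) \<le> (SUP i\<in>I. Inf (S i))"
      by (rule cSUP_upper[OF \<open>i \<in> I\<close> bdd_Inf])
    then obtain z where "z \<in> S i" "z < y"
      using cInf_lessD[of "S i" y] b_in[OF \<open>i \<in> I\<close>] y by fastforce
    moreover have "f i y \<le> f i z"
      using antimonoD[OF anti[OF \<open>i \<in> I\<close>]] \<open>z < y\<close> by simp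
    ultimately show "y \<in> S i"
      by (simp add: S_def)
  qed
  then have "Inf T \<le> (SUP i\<in>I. Inf (S i))"
    using \<open>bdd_below T\<close> by (meson cInf_lower dense_ge)
  with SUP_le show ?thesis
    unfolding T_eq by (simp add: S_def)
qed

lemma INF_Inf_strict_sublevel_antimono:
  fixes f :: "'i \<Rightarrow> real \<Rightarrow> real"
  assumes "I \<noteq> {}" and bdd: "\<And>x. bdd_below ((\<lambda>i. f i x) ` I)"
    and anti: "\<And>i. i \<in> I \<Longrightarrow> antimono (f i)"
    and above: "\<And>i. i \<in> I \<Longrightarrow> c \<le> f i a" and below: "\<And>i. i \<in> I \<Longrightarrow> f i b < c"
  shows "(INF i\<in>I. Inf {x. f i x < c}) = Inf {x. (INF i\<in>I. f i x) < c}"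
proof -
  define S where "S i = {x. f i x < c}" for i
  have U_eq: "{x. (INF i\<in>I. f i x) < c} = (\<Union>i\<in>I. S i)"
    unfolding S_def using cINF_less_iff[OF \<open>I \<noteq> {}\<close> bdd] by auto
  have a_less: "a < x" if "i \<in> I" "x \<in> S i" for i x
  proof (rule ccontr)
    assume "\<not> a < x"
    then have "f i a \<le> f i x" using anti[OF that(1)] by (simp add: antimono_def)
    then show False using above[OF that(1)] that(2) by (simp add: S_def)
  qed
  have "S i \<noteq> {}" if "i \<in> I" for i
    using below[OF that] unfolding S_def by blast
  moreover have "bdd_below (\<Union>i\<in>I. S i)"
  proof (rule bdd_belowI)
    fix x assume "x \<in> (\<Union>i\<in>I. S i)"
    then show "a \<le> x" using a_less by (blast intro: less_imp_le)
  qed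
  ultimately have "Inf (\<Union>i\<in>I. S i) = (INF i\<in>I. Inf (S i))"
    using cINF_UNION[of I S "\<lambda>x. x"] \<open>I \<noteq> {}\<close> by simp
  then show ?thesis
    unfolding U_eq by (simp add: S_def)
qed

lemma ge_set_antimono: "x \<le> y \<Longrightarrow> ge_set M X y \<subseteq> ge_set M X x"
  unfolding ge_set_def by auto

lemma ge_set_in_sets: "X \<in> borel_measurable M \<Longrightarrow> ge_set M X x \<in> sets M"
  unfolding ge_set_def by measurable

lemma bmfun_measurable: "X \<in> bmfun M \<Longrightarrow> X \<in> borel_measurable M"
  unfolding bmfun_def by simp

lemma bmfun_ge_set_space_empty:
  assumes "X \<in> bmfun M"
  obtains a b where "ge_set M X a = space M" and "ge_set M X b = {}"
proof -
  obtain B where B: "\<And>\<omega>. \<omega> \<in> space M \<Longrightarrow> \<bar>X \<omega>\<bar> \<le> B"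
    using assms unfolding bmfun_def bounded_iff by auto
  have "ge_set M X (- B) = space M" "ge_set M X (B + 1) = {}"
    unfolding ge_set_def using B by (force simp: abs_le_iff)+
  then show thesis by (rule that)
qed

lemma capacity_mono: "capacity M w \<Longrightarrow> A \<in> sets M \<Longrightarrow> B \<in> sets M \<Longrightarrow> A \<subseteq> B \<Longrightarrow> w A \<le> w B"
  unfolding capacity_def by blast

lemma capacity_empty: "capacity M w \<Longrightarrow> w {} = 0"
  unfolding capacity_def by blast

lemma capacity_space: "capacity M w \<Longrightarrow> w (space M) = 1"
  unfolding capacity_def by blast

lemma capacity_bounds:
  assumes "capacity M w" and "A \<in> sets M"
  shows "0 \<le> w A" and "w A \<le> 1"
proof -
  show "0 \<le> w A"
    using capacity_mono[OF assms(1) sets.empty_sets assms(2)] capacity_empty[OF assms(1)] by simp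
  show "w A \<le> 1"
    using capacity_mono[OF assms(1) assms(2) sets.top sets.sets_into_space[OF assms(2)]]
      capacity_space[OF assms(1)] by simp
qed

lemma capacity_ge_set_antimono:
  assumes "capacity M w" and "X \<in> borel_measurable M"
  shows "antimono (\<lambda>x. w (ge_set M X x))"
  using assms by (auto intro!: antimonoI capacity_mono ge_set_in_sets ge_set_antimono)

lemma SUP_quantile:
  assumes "W \<noteq> {}" and W: "\<And>w. w \<in> W \<Longrightarrow> capacity M w" and X: "X \<in> bmfun M"
    and "0 < \<alpha>" and "\<alpha> \<le> 1"
  shows "(SUP w\<in>W. quantile M w \<alpha> X) = quantile M (\<lambda>A. SUP w\<in>W. w A) \<alpha> X"
proof -
  obtain a b where a: "ge_set M X a = space M" and b: "ge_set M X b = {}"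
    using bmfun_ge_set_space_empty[OF X] .
  show ?thesis
    unfolding quantile_def
  proof (rule SUP_Inf_sublevel_antimono[where a = a and b = b])
    show "bdd_above ((\<lambda>w. w (ge_set M X x)) ` W)" for x
      using capacity_bounds(2)[OF W ge_set_in_sets[OF bmfun_measurable[OF X]]] by (auto intro!: bdd_aboveI[of _ 1])
  qed (use assms capacity_ge_set_antimono[OF W bmfun_measurable[OF X]] in
         \<open>auto simp: a b capacity_space[OF W] capacity_empty[OF W]\<close>)
qed

lemma INF_upper_quantile:
  assumes "W \<noteq> {}" and W: "\<And>w. w \<in> W \<Longrightarrow> capacity M w" and X: "X \<in> bmfun M"
    and "0 \<le> \<alpha>" and "\<alpha> < 1"
  shows "(INF w\<in>W. upper_quantile M w \<alpha> X) = upper_quantile M (\<lambda>A. INF w\<in>W. w A) \<alpha> X"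
proof -
  obtain a b where a: "ge_set M X a = space M" and b: "ge_set M X b = {}"
    using bmfun_ge_set_space_empty[OF X] .
  show ?thesis
    unfolding upper_quantile_def
  proof (rule INF_Inf_strict_sublevel_antimono[where a = a and b = b])
    show "bdd_below ((\<lambda>w. w (ge_set M X x)) ` W)" for x
      using capacity_bounds(1)[OF W ge_set_in_sets[OF bmfun_measurable[OF X]]] by (auto intro!: bdd_belowI[of _ 0])
  qed (use assms capacity_ge_set_antimono[OF W bmfun_measurable[OF X]] in
         \<open>auto simp: a b capacity_space[OF W] capacity_empty[OF W]\<close>)
qed


lemma capacity_SUP:
  assumes "W \<noteq> {}" and W: "\<And>w. w \<in> W \<Longrightarrow> capacity M w"
  shows "capacity M (\<lambda>A. SUP w\<in>W. w A)"
  unfolding capacity_def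
proof (intro conjI ballI impI)
  fix A B assume "A \<in> sets M" "B \<in> sets M" "A \<subseteq> B"
  then have "w A \<le> w B" if "w \<in> W" for w
    using capacity_mono[OF W[OF that]] by simp
  then show "(SUP w\<in>W. w A) \<le> (SUP w\<in>W. w B)"
    using \<open>W \<noteq> {}\<close> capacity_bounds(2)[OF W \<open>B \<in> sets M\<close>]
    by (intro cSUP_mono) (auto intro!: bdd_aboveI[of _ 1])
next
  have "(SUP w\<in>W. w {}) = (SUP w\<in>W. 0)" "(SUP w\<in>W. w (space M)) = (SUP w\<in>W. 1)"
    by (auto intro!: SUP_cong simp: capacity_empty[OF W] capacity_space[OF W])
  then show "(SUP w\<in>W. w {}) = 0" "(SUP w\<in>W. w (space M)) = 1"
    using \<open>W \<noteq> {}\<close> by simp_all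
qed

lemma capacity_INF:
  assumes "W \<noteq> {}" and W: "\<And>w. w \<in> W \<Longrightarrow> capacity M w"
  shows "capacity M (\<lambda>A. INF w\<in>W. w A)"
  unfolding capacity_def
proof (intro conjI ballI impI)
  fix A B assume "A \<in> sets M" "B \<in> sets M" "A \<subseteq> B"
  then have "w A \<le> w B" if "w \<in> W" for w
    using capacity_mono[OF W[OF that]] by simp
  then show "(INF w\<in>W. w A) \<le> (INF w\<in>W. w B)"
    using \<open>W \<noteq> {}\<close> capacity_bounds(1)[OF W \<open>A \<in> sets M\<close>]
    by (intro cINF_mono) (auto intro!: bdd_belowI[of _ 0])
next
  have "(INF w\<in>W. w {}) = (INF w\<in>W. 0)" "(INF w\<in>W. w (space M)) = (INF w\<in>W. 1)"
    by (auto intro!: INF_cong simp: capacity_empty[OF W] capacity_space[OF W])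
  then show "(INF w\<in>W. w {}) = 0" "(INF w\<in>W. w (space M)) = 1"
    using \<open>W \<noteq> {}\<close> by simp_all
qed

lemma Sup_subset_zero_one:
  fixes S :: "real set"
  assumes "S \<noteq> {}" and "S \<subseteq> {0, 1}"
  shows "Sup S \<in> {0, 1}"
proof -
  have "finite S"
    using assms(2) by (rule finite_subset) simp
  then show ?thesis
    using assms by (metis cSup_eq_Max Max_in subsetD)
qed

lemma Inf_subset_zero_one:
  fixes S :: "real set"
  assumes "S \<noteq> {}" and "S \<subseteq> {0, 1}"
  shows "Inf S \<in> {0, 1}"
proof -
  have "finite S"
    using assms(2) by (rule finite_subset) simp
  then show ?thesis
    using assms by (metis cInf_eq_Min Min_in subsetD)
qed

lemma binary_capacity_SUP:
  assumes "V \<noteq> {}" and V: "\<And>v. v \<in> V \<Longrightarrow> binary_capacity M v"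
  shows "binary_capacity M (\<lambda>A. SUP v\<in>V. v A)"
  unfolding binary_capacity_def
proof (intro conjI ballI)
  show "capacity M (\<lambda>A. SUP v\<in>V. v A)"
    using assms by (intro capacity_SUP) (auto simp: binary_capacity_def)
  fix A assume "A \<in> sets M"
  then have "(\<lambda>v. v A) ` V \<subseteq> {0, 1}"
    using V by (auto simp: binary_capacity_def)
  then show "(SUP v\<in>V. v A) \<in> {0, 1}"
    using \<open>V \<noteq> {}\<close> by (intro Sup_subset_zero_one) auto
qed

lemma binary_capacity_INF:
  assumes "V \<noteq> {}" and V: "\<And>v. v \<in> V \<Longrightarrow> binary_capacity M v"
  shows "binary_capacity M (\<lambda>A. INF v\<in>V. v A)"
  unfolding binary_capacity_def
proof (intro conjI ballI)
  show "capacity M (\<lambda>A. INF v\<in>V. v A)"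
    using assms by (intro capacity_INF) (auto simp: binary_capacity_def)
  fix A assume "A \<in> sets M"
  then have "(\<lambda>v. v A) ` V \<subseteq> {0, 1}"
    using V by (auto simp: binary_capacity_def)
  then show "(INF v\<in>V. v A) \<in> {0, 1}"
    using \<open>V \<noteq> {}\<close> by (intro Inf_subset_zero_one) auto
qed


lemma antimono_zero_one_step:
  fixes g :: "real \<Rightarrow> real"
  assumes anti: "antimono g" and vals: "\<And>x. g x \<in> {0, 1}" and "g a = 1" and "g b = 0"
  shows "x < Inf {x. g x = 0} \<Longrightarrow> g x = 1" and "Inf {x. g x = 0} < x \<Longrightarrow> g x = 0"
proof -
  define Z where "Z = {x. g x = 0}"
  have "b \<in> Z"
    using \<open>g b = 0\<close> by (simp add: Z_def)
  have "a \<le> z" if "z \<in> Z" for z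
  proof (rule ccontr)
    assume "\<not> a \<le> z"
    then have "g a \<le> g z"
      using antimonoD[OF anti] by simp
    with \<open>g a = 1\<close> that show False
      by (simp add: Z_def)
  qed
  then have "bdd_below Z"
    by (rule bdd_belowI)
  show "g x = 1" if "x < Inf {x. g x = 0}"
  proof (rule ccontr)
    assume "g x \<noteq> 1"
    then have "x \<in> Z"
      using vals[of x] by (simp add: Z_def)
    then show False
      using cInf_lower[OF _ \<open>bdd_below Z\<close>] that by (fastforce simp: Z_def)
  qed
  show "g x = 0" if gt: "Inf {x. g x = 0} < x"
  proof -
    obtain z where "z \<in> Z" "z < x"
      using cInf_lessD[of Z x] \<open>b \<in> Z\<close> gt by (auto simp: Z_def)
    then have "g x \<le> 0"
      using antimonoD[OF anti, of z x] by (simp add: Z_def)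
    then show ?thesis
      using vals[of x] by auto
  qed
qed

lemma step_function_choquet_integral:
  fixes g :: "real \<Rightarrow> real"
  assumes lt: "\<And>x. x < c \<Longrightarrow> g x = 1" and gt: "\<And>x. c < x \<Longrightarrow> g x = 0"
  shows "integral {..0} (\<lambda>x. g x - 1) + integral {0..} g = c"
proof -
  have "((\<lambda>x. -1::real) has_integral min c 0) {min c 0..0}"
    using has_integral_const_real[of "-1::real" "min c 0" 0] by simp
  then have "((\<lambda>x. if x \<in> {min c 0..0} then -1::real else 0) has_integral min c 0) {..0}"
    by (subst has_integral_restrict) auto
  then have neg: "((\<lambda>x. g x - 1) has_integral min c 0) {..0}"
    by (rule has_integral_spike_finite[where S="{c,0}", rotated 2]) (auto simp: lt gt)
  have "((\<lambda>x. 1::real) has_integral max c 0) {0..max c 0}"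
    using has_integral_const_real[of "1::real" 0 "max c 0"] by simp
  then have "((\<lambda>x. if x \<in> {0..max c 0} then 1::real else 0) has_integral max c 0) {0..}"
    by (subst has_integral_restrict) auto
  then have pos: "(g has_integral max c 0) {0..}"
    by (rule has_integral_spike_finite[where S="{c,0}", rotated 2]) (auto simp: lt gt)
  show ?thesis
    using integral_unique[OF neg] integral_unique[OF pos] by simp
qed

lemma binary_capacity_values:
  "binary_capacity M u \<Longrightarrow> X \<in> borel_measurable M \<Longrightarrow> u (ge_set M X x) \<in> {0, 1}"
  unfolding binary_capacity_def using ge_set_in_sets by blast

lemma choquet_binary_capacity:
  assumes u: "binary_capacity M u" and X: "X \<in> bmfun M"
  shows "choquet M u X = Inf {x. u (ge_set M X x) = 0}"
proof -
  have cap: "capacity M u"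
    using u by (simp add: binary_capacity_def)
  obtain a b where "ge_set M X a = space M" and "ge_set M X b = {}"
    using bmfun_ge_set_space_empty[OF X] .
  then have "u (ge_set M X a) = 1" "u (ge_set M X b) = 0"
    using capacity_space[OF cap] capacity_empty[OF cap] by simp_all
  then show ?thesis
    unfolding choquet_def
    using antimono_zero_one_step[OF capacity_ge_set_antimono[OF cap bmfun_measurable[OF X]]
        binary_capacity_values[OF u bmfun_measurable[OF X]]]
    by (intro step_function_choquet_integral) blast+
qed

lemma quantile_binary_capacity:
  assumes "binary_capacity M u" and "X \<in> borel_measurable M" and "0 < \<alpha>" and "\<alpha> \<le> 1"
  shows "quantile M u \<alpha> X = Inf {x. u (ge_set M X x) = 0}"
  unfolding quantile_def
  using binary_capacity_values[OF assms(1,2)] assms(3,4) by (intro arg_cong[where f = Inf]) force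

lemma upper_quantile_binary_capacity:
  assumes "binary_capacity M u" and "X \<in> borel_measurable M" and "0 \<le> \<alpha>" and "\<alpha> < 1"
  shows "upper_quantile M u \<alpha> X = Inf {x. u (ge_set M X x) = 0}"
  unfolding upper_quantile_def
  using binary_capacity_values[OF assms(1,2)] assms(3,4) by (intro arg_cong[where f = Inf]) force


theorem proposition3:
  fixes M :: "'a measure" and W V :: "('a set \<Rightarrow> real) set" and \<alpha> :: real
  assumes "W \<noteq> {}" and "\<forall>w\<in>W. capacity M w"
    and "V \<noteq> {}" and "\<forall>v\<in>V. binary_capacity M v"
    and "0 < \<alpha>" and "\<alpha> < 1"
  shows "(\<forall>X\<in>bmfun M. (SUP w\<in>W. quantile M w \<alpha> X) = quantile M (\<lambda>A. SUP w\<in>W. w A) \<alpha> X)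
       \<and> (\<forall>X\<in>bmfun M. (SUP v\<in>V. choquet M v X) = choquet M (\<lambda>A. SUP v\<in>V. v A) X)
       \<and> (\<forall>X\<in>bmfun M. (INF w\<in>W. upper_quantile M w \<alpha> X) = upper_quantile M (\<lambda>A. INF w\<in>W. w A) \<alpha> X)
       \<and> (\<forall>X\<in>bmfun M. (INF v\<in>V. choquet M v X) = choquet M (\<lambda>A. INF v\<in>V. v A) X)"
proof (intro conjI ballI)
  fix X assume X: "X \<in> bmfun M"
  have W: "\<And>w. w \<in> W \<Longrightarrow> capacity M w" and V: "\<And>v. v \<in> V \<Longrightarrow> binary_capacity M v"
    using assms(2,4) by blast+
  then have V_capacity: "\<And>v. v \<in> V \<Longrightarrow> capacity M v"
    by (simp add: binary_capacity_def)
  have choquet_eq_quantile: "choquet M u X = quantile M u \<alpha> X"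
    and choquet_eq_upper_quantile: "choquet M u X = upper_quantile M u \<alpha> X"
    if "binary_capacity M u" for u
    using choquet_binary_capacity[OF that X] assms(5,6)
      quantile_binary_capacity[OF that bmfun_measurable[OF X]]
      upper_quantile_binary_capacity[OF that bmfun_measurable[OF X]] by simp_all
  show "(SUP w\<in>W. quantile M w \<alpha> X) = quantile M (\<lambda>A. SUP w\<in>W. w A) \<alpha> X"
    using SUP_quantile[OF assms(1) W X] assms(5,6) by simp
  show "(INF w\<in>W. upper_quantile M w \<alpha> X) = upper_quantile M (\<lambda>A. INF w\<in>W. w A) \<alpha> X"
    using INF_upper_quantile[OF assms(1) W X] assms(5,6) by simp
  have "(SUP v\<in>V. choquet M v X) = (SUP v\<in>V. quantile M v \<alpha> X)"
    using V choquet_eq_quantile by (intro SUP_cong) auto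
  also have "\<dots> = quantile M (\<lambda>A. SUP v\<in>V. v A) \<alpha> X"
    using SUP_quantile[OF assms(3) V_capacity X] assms(5,6) by simp
  also have "\<dots> = choquet M (\<lambda>A. SUP v\<in>V. v A) X"
    using choquet_eq_quantile[OF binary_capacity_SUP[OF assms(3) V]] by simp
  finally show "(SUP v\<in>V. choquet M v X) = choquet M (\<lambda>A. SUP v\<in>V. v A) X" .
  have "(INF v\<in>V. choquet M v X) = (INF v\<in>V. upper_quantile M v \<alpha> X)"
    using V choquet_eq_upper_quantile by (intro INF_cong) auto
  also have "\<dots> = upper_quantile M (\<lambda>A. INF v\<in>V. v A) \<alpha> X"
    using INF_upper_quantile[OF assms(3) V_capacity X] assms(5,6) by simp
  also have "\<dots> = choquet M (\<lambda>A. INF v\<in>V. v A) X"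
    using choquet_eq_upper_quantile[OF binary_capacity_INF[OF assms(3) V]] by simp
  finally show "(INF v\<in>V. choquet M v X) = choquet M (\<lambda>A. INF v\<in>V. v A) X" .
qed

end
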